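(* Let $d,N,m$ be positive integers with $m\ge d$ and $N\ge d$. Let $X\in\mathbb{R}^{d\times m}$ be a data matrix with $XX^T=I_d$ (whitened data). Consider the two-layer linear network $f(x)=W_2W_1x$ with $W_1\in\mathbb{R}^{N\times d}$, $W_2\in\mathbb{R}^{1\times N}$, whose initial weights satisfy $\|W_1^{(0)}\|_F=\|W_2^{(0)}\|_F=\sigma$ with $0<\sigma\ll 1$. Targets are $Y=\beta^TX$ with $\beta\in\mathbb{R}^d$ having i.i.d. entries $\beta_i\sim\mathcal{N}(0,1/d)$; write $\hat\beta=\beta/\|\beta\|$. Define the initial NTK $K^{(0)}=X^T\big(W_1^{(0)T}W_1^{(0)}+\|W_2^{(0)}\|^2 I_d\big)X$ and the final NTK (after training by gradient flow on the mean squared error) $K^{(f)}=\|\beta\|\,X^T(\hat\beta\hat\beta^T+I_d)X+O(\sigma^2)$. Then, neglecting additive $O(\sigma^2)$ terms, the expected kernel alignment $\mathbb{E}_\beta\big[\mathrm{KA}(K^{(f)},K^{(0)})\big]$, viewed as a function of $W_1^{(0)}$ over all $W_1^{(0)}$ with $\|W_1^{(0)}\|_F=\sigma$, is maximized by high-rank isotropic initializations, i.e. by $W_1^{(0)}$ whose $d$ singular values $s_1,\dots,s_d$ all have equal absolute value ($s_j^2=\sigma^2/d$ for all $j$).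
   Context: The kernel alignment of two $m\times m$ matrices is $\mathrm{KA}(K^{(f)},K^{(0)})=\dfrac{\operatorname{Tr}(K^{(f)}K^{(0)})}{\|K^{(f)}\|_F\,\|K^{(0)}\|_F}$. The expectation is over the random task vector $\beta$. The expression for $K^{(f)}$ is the asymptotic (infinite-training-time) neural tangent kernel of this network in the small-initialization regime, and is taken as given. *)

theory Defs
  imports "HOL-Analysis.Analysis" "HOL-Probability.Probability"
begin

definition frob_norm :: "real^'c^'r \<Rightarrow> real" where
  "frob_norm A = sqrt (\<Sum>i\<in>UNIV. \<Sum>j\<in>UNIV. (A$i$j)\<^sup>2)"

definition kernel_alignment :: "real^'m^'m \<Rightarrow> real^'m^'m \<Rightarrow> real" where
  "kernel_alignment K1 K0 = trace (K1 ** K0) / (frob_norm K1 * frob_norm K0)"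

definition outer :: "real^'d \<Rightarrow> real^'d \<Rightarrow> real^'d^'d" where
  "outer u v = (\<chi> i j. u$i * v$j)"

definition ntk_init :: "real^'m^'d \<Rightarrow> real^'d^'n \<Rightarrow> real^'n \<Rightarrow> real^'m^'m" where
  "ntk_init X W1 W2 = transpose X ** (transpose W1 ** W1 + ((norm W2)\<^sup>2) *\<^sub>R mat 1) ** X"

text \<open>Final NTK, leading order (the O(sigma^2) term neglected):
  K_f = |beta| X^T (bhat bhat^T + I) X, with bhat = beta/|beta|.\<close>
definition ntk_final :: "real^'m^'d \<Rightarrow> real^'d \<Rightarrow> real^'m^'m" where
  "ntk_final X \<beta> = norm \<beta> *\<^sub>R (transpose X **
      (outer (\<beta> /\<^sub>R norm \<beta>) (\<beta> /\<^sub>R norm \<beta>) + mat 1) ** X)"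

definition beta_law :: "('d::finite \<Rightarrow> real) measure" where
  "beta_law = PiM UNIV (\<lambda>_. density lborel (normal_density 0 (sqrt (1 / real CARD('d)))))"

definition expected_KA :: "real^'m^'d::finite \<Rightarrow> real^'d^'n \<Rightarrow> real^'n \<Rightarrow> real" where
  "expected_KA X W1 W2 =
     (\<integral>g. kernel_alignment (ntk_final X (\<chi> i. g i)) (ntk_init X W1 W2) \<partial>beta_law)"

definition sq_singular_values :: "real^'d^'n \<Rightarrow> real set" where
  "sq_singular_values W = {s. \<exists>v. v \<noteq> 0 \<and> (transpose W ** W) *v v = s *\<^sub>R v}"

end

theory Submission
  imports Defs
begin

text \<open>
  Whitening makes conjugation by X an isometry for the trace pairing and the Frobenius norm, so
  the alignment of the two kernels is that of bhat bhat^T + I with M + |W2|^2 I, where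
  M = W1^T W1; the task enters only through the quadratic form bhat^T M bhat. The law of beta is
  invariant under sign changes and permutations of coordinates, hence E[bhat bhat^T] = I/d and
  the expected alignment is an explicit function of trace M and of the Frobenius norm of
  M + |W2|^2 I. For trace M = sigma^2 this norm is, up to a constant, the Frobenius distance of M
  from (sigma^2/d) I, so the expected alignment is maximal exactly when M = (sigma^2/d) I, i.e.
  when all squared singular values of W1 equal sigma^2/d; such W1 exist because N >= d.
\<close>


section \<open>Frobenius norm, trace and anisotropy\<close>

lemma matrix_add_rdistrib: "((A :: 'a::semiring_1^'n^'m) + B) ** C = A ** C + B ** C"
  by (simp add: matrix_matrix_mult_def vec_eq_iff sum.distrib distrib_right)

lemma trace_scaleR: "trace (c *\<^sub>R A) = c * trace A"
  by (simp add: trace_def sum_distrib_left)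

lemma frob_norm_nonneg: "0 \<le> frob_norm A"
  unfolding frob_norm_def by (simp add: sum_nonneg)

lemma frob_norm_squared: "(frob_norm A)\<^sup>2 = (\<Sum>i\<in>UNIV. \<Sum>j\<in>UNIV. (A$i$j)\<^sup>2)"
  unfolding frob_norm_def by (simp add: sum_nonneg)

lemma frob_norm_eq_0_iff: "frob_norm A = 0 \<longleftrightarrow> A = 0"
  unfolding frob_norm_def by (simp add: sum_nonneg sum_nonneg_eq_0_iff vec_eq_iff)

lemma frob_norm_scaleR: "frob_norm (c *\<^sub>R A) = \<bar>c\<bar> * frob_norm A"
  unfolding frob_norm_def
  by (simp add: power_mult_distrib sum_distrib_left[symmetric] real_sqrt_mult)

lemma frob_norm_squared_eq_trace: "(frob_norm A)\<^sup>2 = trace (transpose A ** A)"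
  unfolding frob_norm_squared trace_def
  by (subst sum.swap) (simp add: matrix_matrix_mult_def transpose_def power2_eq_square)

lemma frob_norm_add_scaleR_mat_squared:
  fixes M :: "real^'d^'d"
  shows "(frob_norm (M + p *\<^sub>R mat 1))\<^sup>2 = (frob_norm M)\<^sup>2 + 2 * p * trace M + real CARD('d) * p\<^sup>2"
proof -
  have "((M + p *\<^sub>R mat 1)$i$j)\<^sup>2 = (M$i$j)\<^sup>2 + (if i = j then 2 * p * M$i$i + p\<^sup>2 else 0)" for i j
    by (simp add: mat_def power2_eq_square algebra_simps)
  then show ?thesis
    by (simp add: frob_norm_squared sum.distrib trace_def sum_distrib_left)
qed

definition anisotropy :: "real^'d^'d \<Rightarrow> real" where
  "anisotropy M = frob_norm (M - (trace M / real CARD('d)) *\<^sub>R mat 1)"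

lemma anisotropy_nonneg: "0 \<le> anisotropy M"
  unfolding anisotropy_def by (rule frob_norm_nonneg)

lemma anisotropy_eq_0_iff:
  fixes M :: "real^'d^'d"
  shows "anisotropy M = 0 \<longleftrightarrow> M = (trace M / real CARD('d)) *\<^sub>R mat 1"
  unfolding anisotropy_def frob_norm_eq_0_iff by simp

lemma frob_norm_add_scaleR_mat_squared_anisotropy:
  fixes M :: "real^'d^'d"
  shows "(frob_norm (M + p *\<^sub>R mat 1))\<^sup>2
       = (anisotropy M)\<^sup>2 + (trace M + real CARD('d) * p)\<^sup>2 / real CARD('d)"
  using frob_norm_add_scaleR_mat_squared[of M p]
    frob_norm_add_scaleR_mat_squared[of M "- trace M / real CARD('d)"]
  unfolding anisotropy_def by (simp add: field_simps power2_eq_square)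

lemma trace_mult_conj_coisometry:
  fixes X :: "real^'m^'d" and A B :: "real^'d^'d"
  assumes "X ** transpose X = mat 1"
  shows "trace ((transpose X ** A ** X) ** (transpose X ** B ** X)) = trace (A ** B)"
proof -
  have "(transpose X ** A ** X) ** (transpose X ** B ** X) = transpose X ** A ** (X ** transpose X) ** B ** X"
    by (simp add: matrix_mul_assoc)
  also have "\<dots> = transpose X ** (A ** B ** X)"
    using assms by (simp add: matrix_mul_assoc)
  finally have "trace ((transpose X ** A ** X) ** (transpose X ** B ** X)) = trace ((A ** B ** X) ** transpose X)"
    by (metis trace_mul_sym)
  also have "\<dots> = trace (A ** B)"
    using assms by (simp flip: matrix_mul_assoc)
  finally show ?thesis .
qed

lemma frob_norm_conj_coisometry:
  fixes X :: "real^'m^'d" and A :: "real^'d^'d"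
  assumes "X ** transpose X = mat 1"
  shows "frob_norm (transpose X ** A ** X) = frob_norm A"
proof -
  have "transpose (transpose X ** A ** X) = transpose X ** transpose A ** X"
    by (simp add: matrix_transpose_mul matrix_mul_assoc)
  then have "(frob_norm (transpose X ** A ** X))\<^sup>2 = (frob_norm A)\<^sup>2"
    using trace_mult_conj_coisometry[OF assms] by (simp add: frob_norm_squared_eq_trace)
  then show ?thesis
    by (simp add: power2_eq_iff_nonneg[OF frob_norm_nonneg frob_norm_nonneg])
qed

lemma norm_vec_squared: "(norm v)\<^sup>2 = (\<Sum>i\<in>UNIV. (v$i)\<^sup>2)"
  by (simp only: power2_norm_eq_inner inner_vec_def) (simp add: power2_eq_square)

lemma trace_outer_mult: "trace (outer u v ** M) = v \<bullet> (M *v u)"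
  unfolding trace_def outer_def matrix_matrix_mult_def matrix_vector_mult_def inner_vec_def
  by (simp add: inner_real_def sum_distrib_left) (subst sum.swap, simp add: mult_ac)

lemma frob_norm_outer: "frob_norm (outer u v) = norm u * norm v"
proof -
  have "(frob_norm (outer u v))\<^sup>2 = (norm u * norm v)\<^sup>2"
    by (simp add: frob_norm_squared norm_vec_squared outer_def power_mult_distrib
        sum_distrib_left sum_distrib_right) (rule sum.swap)
  then show ?thesis
    by (simp add: power2_eq_iff_nonneg[OF frob_norm_nonneg])
qed

lemma frob_norm_outer_unit_plus_id:
  fixes b :: "real^'d"
  assumes "norm b = 1"
  shows "frob_norm (outer b b + mat 1) = sqrt (real CARD('d) + 3)"
proof -
  have "trace (outer b b) = 1"
    using trace_outer_mult[of b b "mat 1"] assms by (simp add: power2_norm_eq_inner[symmetric])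
  then have "(frob_norm (outer b b + 1 *\<^sub>R mat 1))\<^sup>2 = real CARD('d) + 3"
    unfolding frob_norm_add_scaleR_mat_squared by (simp add: frob_norm_outer assms)
  then show ?thesis
    by (simp add: real_sqrt_unique frob_norm_nonneg)
qed

lemma inner_sgn_matrix_vector_sgn:
  fixes v :: "real^'d"
  shows "sgn v \<bullet> (A *v sgn v) = (\<Sum>i\<in>UNIV. \<Sum>j\<in>UNIV. A$i$j * (v$i * v$j / (\<Sum>k\<in>UNIV. (v$k)\<^sup>2)))"
proof -
  have "sgn v \<bullet> (A *v sgn v) = v \<bullet> (A *v v) / (norm v)\<^sup>2"
    by (simp add: sgn_div_norm matrix_vector_mult_scaleR power2_eq_square divide_inverse)
  then show ?thesis
    by (simp add: norm_vec_squared inner_vec_def matrix_vector_mult_def sum_divide_distrib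
        sum_distrib_left mult_ac)
qed

section \<open>Symmetric matrices with a single eigenvalue\<close>

lemma nonneg_quadratic_imp_linear_coeff_eq_0:
  fixes a b :: real
  assumes nonneg: "\<And>t. 0 \<le> 2 * t * a + t\<^sup>2 * b"
  shows "a = 0"
proof -
  have "0 \<le> b"
    using nonneg[of 1] nonneg[of "-1"] by simp
  define t where "t = - a / (1 + b)"
  have t: "t * (1 + b) = - a"
    using \<open>0 \<le> b\<close> by (simp add: t_def)
  have "0 \<le> (2 * t * a + t\<^sup>2 * b) * (1 + b)\<^sup>2"
    using nonneg[of t] by simp
  also have "\<dots> = 2 * a * (t * (1 + b)) * (1 + b) + (t * (1 + b))\<^sup>2 * b"
    by (simp add: power2_eq_square algebra_simps)
  also have "\<dots> = - (a\<^sup>2 * (2 + b))"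
    unfolding t by (simp add: power2_eq_square algebra_simps)
  finally have "a\<^sup>2 * (2 + b) \<le> 0"
    by simp
  then show ?thesis
    using \<open>0 \<le> b\<close> by (simp add: mult_le_0_iff)
qed

lemma inner_matrix_vector_symmetric:
  fixes A :: "real^'n^'n"
  assumes "transpose A = A"
  shows "y \<bullet> (A *v x) = x \<bullet> (A *v y)"
  by (metis assms dot_lmul_matrix inner_commute transpose_transpose vector_transpose_matrix)

lemma psd_matrix_vector_eq_0:
  fixes A :: "real^'n^'n"
  assumes sym: "transpose A = A" and psd: "\<And>x. 0 \<le> x \<bullet> (A *v x)" and "v \<bullet> (A *v v) = 0"
  shows "A *v v = 0"
proof -
  define w where "w = A *v v"
  have "0 \<le> 2 * t * (w \<bullet> w) + t\<^sup>2 * (w \<bullet> (A *v w))" for t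
  proof -
    have "(v + t *\<^sub>R w) \<bullet> (A *v (v + t *\<^sub>R w))
        = v \<bullet> (A *v v) + t * (v \<bullet> (A *v w)) + t * (w \<bullet> (A *v v)) + t\<^sup>2 * (w \<bullet> (A *v w))"
      by (simp add: matrix_vector_right_distrib matrix_vector_mult_scaleR inner_add_left inner_add_right
          power2_eq_square algebra_simps)
    also have "\<dots> = 2 * t * (w \<bullet> w) + t\<^sup>2 * (w \<bullet> (A *v w))"
      using \<open>v \<bullet> (A *v v) = 0\<close> inner_matrix_vector_symmetric[OF sym, of v w] by (simp add: w_def)
    finally show ?thesis
      using psd[of "v + t *\<^sub>R w"] by simp
  qed
  then have "w \<bullet> w = 0"
    by (rule nonneg_quadratic_imp_linear_coeff_eq_0)
  then show ?thesis
    by (simp add: w_def)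
qed

lemma symmetric_matrix_max_eigenvector:
  fixes A :: "real^'n^'n"
  assumes sym: "transpose A = A"
  obtains v l where "v \<noteq> 0" "A *v v = l *\<^sub>R v" "\<And>x. x \<bullet> (A *v x) \<le> l * (x \<bullet> x)"
proof -
  have "sphere (0::real^'n) 1 \<noteq> {}"
    using vector_choose_size[of 1] by auto
  moreover have "continuous_on (sphere 0 1) (\<lambda>x::real^'n. x \<bullet> (A *v x))"
    by (intro continuous_intros linear_continuous_on matrix_vector_mul_bounded_linear)
  ultimately obtain v where "v \<in> sphere 0 1"
    and v_max: "\<And>y. y \<in> sphere 0 1 \<Longrightarrow> y \<bullet> (A *v y) \<le> v \<bullet> (A *v v)"
    using continuous_attains_sup[OF compact_sphere] by blast
  then have v: "norm v = 1"
    by simp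
  define l where "l = v \<bullet> (A *v v)"
  have bound: "x \<bullet> (A *v x) \<le> l * (x \<bullet> x)" for x
  proof (cases "x = 0")
    case False
    have "(x /\<^sub>R norm x) \<bullet> (A *v (x /\<^sub>R norm x)) \<le> l"
      using False unfolding l_def by (intro v_max) simp
    moreover have "(x /\<^sub>R norm x) \<bullet> (A *v (x /\<^sub>R norm x)) = x \<bullet> (A *v x) / (x \<bullet> x)"
      by (simp add: matrix_vector_mult_scaleR divide_inverse flip: power2_norm_eq_inner)
        (simp add: power2_eq_square)
    ultimately show ?thesis
      using False by (simp add: divide_le_eq)
  qed simp
  have "(l *\<^sub>R mat 1 - A) *v v = 0"
  proof (rule psd_matrix_vector_eq_0)
    show "transpose (l *\<^sub>R mat 1 - A) = l *\<^sub>R mat 1 - A"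
      using sym by (simp add: transpose_def vec_eq_iff mat_def)
    show "0 \<le> x \<bullet> ((l *\<^sub>R mat 1 - A) *v x)" for x
      using bound[of x] by (simp add: matrix_vector_mult_diff_rdistrib inner_diff_right flip: scaleR_matrix_vector_assoc)
    show "v \<bullet> ((l *\<^sub>R mat 1 - A) *v v) = 0"
      using v by (simp add: matrix_vector_mult_diff_rdistrib inner_diff_right l_def power2_norm_eq_inner[symmetric]
          flip: scaleR_matrix_vector_assoc)
  qed
  then have "A *v v = l *\<^sub>R v"
    by (simp add: matrix_vector_mult_diff_rdistrib flip: scaleR_matrix_vector_assoc)
  moreover have "v \<noteq> 0"
    using v by auto
  ultimately show ?thesis
    using bound by (intro that)
qed

lemma symmetric_matrix_eigenvalues_eq_iff:
  fixes A :: "real^'n^'n"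
  assumes sym: "transpose A = A"
  shows "(\<forall>s v. v \<noteq> 0 \<and> A *v v = s *\<^sub>R v \<longrightarrow> s = c) \<longleftrightarrow> A = c *\<^sub>R mat 1"
proof
  assume eig: "\<forall>s v. v \<noteq> 0 \<and> A *v v = s *\<^sub>R v \<longrightarrow> s = c"
  obtain v l where "v \<noteq> 0" "A *v v = l *\<^sub>R v" and upper: "\<And>x. x \<bullet> (A *v x) \<le> l * (x \<bullet> x)"
    using symmetric_matrix_max_eigenvector[OF sym] by blast
  with eig have "l = c"
    by blast
  define N where "N = c *\<^sub>R mat 1 - A"
  have N_apply: "N *v x = c *\<^sub>R x - A *v x" for x
    by (simp add: N_def matrix_vector_mult_diff_rdistrib flip: scaleR_matrix_vector_assoc)
  have N_sym: "transpose N = N"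
    using sym by (simp add: N_def transpose_def vec_eq_iff mat_def)
  have N_psd: "0 \<le> x \<bullet> (N *v x)" for x
    using upper[of x] \<open>l = c\<close> by (simp add: N_apply inner_diff_right)
  obtain w \<mu> where "w \<noteq> 0" "N *v w = \<mu> *\<^sub>R w" and N_upper: "\<And>x. x \<bullet> (N *v x) \<le> \<mu> * (x \<bullet> x)"
    using symmetric_matrix_max_eigenvector[OF N_sym] by blast
  then have "A *v w = (c - \<mu>) *\<^sub>R w"
    by (simp add: N_apply scaleR_diff_left algebra_simps)
  with eig \<open>w \<noteq> 0\<close> have "\<mu> = 0"
    by force
  have "N *v x = 0" for x
  proof (rule psd_matrix_vector_eq_0[OF N_sym N_psd])
    show "x \<bullet> (N *v x) = 0"
      using N_psd[of x] N_upper[of x] \<open>\<mu> = 0\<close> by simp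
  qed
  then show "A = c *\<^sub>R mat 1"
    by (simp add: matrix_eq N_apply flip: scaleR_matrix_vector_assoc)
next
  assume "A = c *\<^sub>R mat 1"
  then show "\<forall>s v. v \<noteq> 0 \<and> A *v v = s *\<^sub>R v \<longrightarrow> s = c"
    by (auto simp flip: scaleR_matrix_vector_assoc dest: scaleR_cancel_right[THEN iffD1, rotated])
qed

lemma sq_singular_values_eq_iff:
  "(\<forall>s\<in>sq_singular_values W. s = c) \<longleftrightarrow> transpose W ** W = c *\<^sub>R mat 1"
  using symmetric_matrix_eigenvalues_eq_iff[of "transpose W ** W" c]
  unfolding sq_singular_values_def by (auto simp: matrix_transpose_mul)

lemma anisotropy_gram_eq_0_iff:
  fixes W :: "real^'d^'n"
  assumes "frob_norm W = \<sigma>"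
  shows "anisotropy (transpose W ** W) = 0 \<longleftrightarrow> (\<forall>s\<in>sq_singular_values W. s = \<sigma>\<^sup>2 / real CARD('d))"
  using frob_norm_squared_eq_trace[of W] assms
  by (simp add: anisotropy_eq_0_iff sq_singular_values_eq_iff)

lemma exists_isometric_embedding:
  assumes "CARD('d::finite) \<le> CARD('n::finite)"
  obtains U :: "real^'d^'n" where "transpose U ** U = mat 1"
proof -
  obtain e :: "'d \<Rightarrow> 'n" where "inj e"
    using card_le_inj[of "UNIV :: 'd set" "UNIV :: 'n set"] assms by auto
  then have "transpose (\<chi> r j. of_bool (r = e j)) ** (\<chi> r j. of_bool (r = e j)) = (mat 1 :: real^'d^'d)"
    by (simp add: matrix_matrix_mult_def transpose_def mat_def vec_eq_iff inj_eq)
  then show ?thesis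
    by (rule that)
qed

lemma exists_isotropic_with_frob_norm:
  assumes "CARD('d::finite) \<le> CARD('n::finite)" and "0 \<le> \<sigma>"
  obtains W :: "real^'d^'n"
  where "frob_norm W = \<sigma>" and "transpose W ** W = (\<sigma>\<^sup>2 / real CARD('d)) *\<^sub>R mat 1"
proof -
  obtain U :: "real^'d^'n" where U: "transpose U ** U = mat 1"
    using exists_isometric_embedding assms(1) by blast
  define W where "W = sqrt (\<sigma>\<^sup>2 / real CARD('d)) *\<^sub>R U"
  have W: "transpose W ** W = (\<sigma>\<^sup>2 / real CARD('d)) *\<^sub>R mat 1"
    by (simp add: W_def U transpose_scalar matrix_scalar_ac flip: scalar_matrix_assoc)
  have "(frob_norm W)\<^sup>2 = \<sigma>\<^sup>2"
    using frob_norm_squared_eq_trace[of W] by (simp add: W trace_scaleR trace_I)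
  then have "frob_norm W = \<sigma>"
    using assms(2) by (simp add: power2_eq_iff_nonneg frob_norm_nonneg)
  then show ?thesis
    using W by (rule that)
qed

section \<open>Coordinate-symmetric product measures\<close>

lemma distr_PiM_coordinatewise:
  assumes "finite I" and "product_prob_space M"
    and f: "\<And>i. i \<in> I \<Longrightarrow> f i \<in> M i \<rightarrow>\<^sub>M M i"
    and f_preserving: "\<And>i. i \<in> I \<Longrightarrow> distr (M i) (M i) (f i) = M i"
  shows "distr (PiM I M) (PiM I M) (\<lambda>\<omega>. \<lambda>i\<in>I. f i (\<omega> i)) = PiM I M"
proof -
  interpret product_prob_space M by fact
  have measurable_map: "(\<lambda>\<omega>. \<lambda>i\<in>I. f i (\<omega> i)) \<in> PiM I M \<rightarrow>\<^sub>M PiM I M"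
    using f by (intro measurable_restrict) (auto intro: measurable_compose[OF measurable_component_singleton])
  show ?thesis
  proof (rule PiM_eqI[OF \<open>finite I\<close>])
    fix A assume A: "\<And>i. i \<in> I \<Longrightarrow> A i \<in> sets (M i)"
    have "(\<lambda>\<omega>. \<lambda>i\<in>I. f i (\<omega> i)) -` PiE I A \<inter> space (PiM I M) = PiE I (\<lambda>i. f i -` A i \<inter> space (M i))"
      by (auto simp: space_PiM PiE_iff)
    moreover have "f i -` A i \<inter> space (M i) \<in> sets (M i)" if "i \<in> I" for i
      using f[OF that] A[OF that] by measurable
    ultimately have "emeasure (distr (PiM I M) (PiM I M) (\<lambda>\<omega>. \<lambda>i\<in>I. f i (\<omega> i))) (PiE I A)
        = (\<Prod>i\<in>I. emeasure (M i) (f i -` A i \<inter> space (M i)))"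
      using A measurable_map \<open>finite I\<close> by (simp add: emeasure_distr sets_PiM_I_finite emeasure_PiM)
    also have "\<dots> = (\<Prod>i\<in>I. emeasure (M i) (A i))"
      using A f by (intro prod.cong refl) (metis emeasure_distr f_preserving)
    finally show "emeasure (distr (PiM I M) (PiM I M) (\<lambda>\<omega>. \<lambda>i\<in>I. f i (\<omega> i))) (PiE I A)
        = (\<Prod>i\<in>I. emeasure (M i) (A i))" .
  qed simp
qed

lemma abs_mult_le_sum_squares:
  fixes g :: "'a \<Rightarrow> real"
  assumes "finite A" "i \<in> A" "j \<in> A"
  shows "\<bar>g i * g j\<bar> \<le> (\<Sum>k\<in>A. (g k)\<^sup>2)"
proof -
  have "2 * \<bar>g i\<bar> * \<bar>g j\<bar> \<le> \<bar>g i\<bar>\<^sup>2 + \<bar>g j\<bar>\<^sup>2"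
    by (rule sum_squares_bound)
  moreover have "(g i)\<^sup>2 \<le> (\<Sum>k\<in>A. (g k)\<^sup>2)" "(g j)\<^sup>2 \<le> (\<Sum>k\<in>A. (g k)\<^sup>2)"
    using assms by (auto intro: member_le_sum)
  ultimately show ?thesis
    by (simp add: abs_mult)
qed

lemma abs_normalized_product_le_1:
  fixes g :: "'d::finite \<Rightarrow> real"
  shows "\<bar>g i * g j / (\<Sum>k\<in>UNIV. (g k)\<^sup>2)\<bar> \<le> 1"
  using abs_mult_le_sum_squares[of UNIV i j g]
  by (cases "(\<Sum>k\<in>UNIV. (g k)\<^sup>2) = 0") (auto simp: abs_divide divide_le_eq_1)

context
  fixes M :: "real measure"
  assumes prob_space_M: "prob_space M" and sets_M [measurable_cong]: "sets M = sets borel"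
    and distr_uminus_M: "distr M M uminus = M" and AE_nonzero_M: "AE x in M. x \<noteq> 0"
begin

lemma product_prob_space_iid: "product_prob_space (\<lambda>_. M)"
  by (simp add: product_prob_spaceI prob_space_M)

lemma AE_PiM_sum_squares_nonzero:
  "AE g in PiM UNIV (\<lambda>_::'d::finite. M). (\<Sum>k\<in>UNIV. (g k)\<^sup>2) \<noteq> 0"
proof -
  have "AE g in PiM UNIV (\<lambda>_::'d. M). g undefined \<noteq> 0"
    by (rule AE_PiM_component) (auto simp: prob_space_M AE_nonzero_M)
  then show ?thesis
    by eventually_elim (auto simp: sum_nonneg_eq_0_iff)
qed

lemma integral_PiM_flip_coordinate:
  fixes F :: "('d::finite \<Rightarrow> real) \<Rightarrow> real"
  assumes [measurable]: "F \<in> borel_measurable (PiM UNIV (\<lambda>_. M))"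
  shows "(\<integral>g. F (g(i := - g i)) \<partial>PiM UNIV (\<lambda>_. M)) = (\<integral>g. F g \<partial>PiM UNIV (\<lambda>_. M))"
proof -
  let ?P = "PiM UNIV (\<lambda>_::'d. M)"
  define f :: "'d \<Rightarrow> real \<Rightarrow> real" where "f k = (if k = i then uminus else (\<lambda>x. x))" for k
  have flip: "(\<lambda>\<omega>. \<lambda>k\<in>UNIV. f k (\<omega> k)) = (\<lambda>g. g(i := - g i))"
    by (auto simp: f_def fun_eq_iff)
  have "distr ?P ?P (\<lambda>g. g(i := - g i)) = ?P"
    unfolding flip[symmetric]
    by (rule distr_PiM_coordinatewise[OF _ product_prob_space_iid])
      (auto simp: f_def distr_uminus_M distr_id measurable_cong_sets[OF sets_M sets_M])
  moreover have "(\<lambda>g. g(i := - g i)) \<in> ?P \<rightarrow>\<^sub>M ?P"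
    using sets_eq_imp_space_eq[OF sets_M] by (intro measurable_PiM_single') (auto simp: space_PiM)
  ultimately show ?thesis
    using integral_distr[of "\<lambda>g. g(i := - g i)" ?P ?P F] by simp
qed

lemma integral_PiM_permute:
  fixes F :: "('d::finite \<Rightarrow> real) \<Rightarrow> real" and \<tau> :: "'d \<Rightarrow> 'd"
  assumes [measurable]: "F \<in> borel_measurable (PiM UNIV (\<lambda>_. M))" and "bij \<tau>"
  shows "(\<integral>g. F (g \<circ> \<tau>) \<partial>PiM UNIV (\<lambda>_. M)) = (\<integral>g. F g \<partial>PiM UNIV (\<lambda>_. M))"
proof -
  let ?P = "PiM UNIV (\<lambda>_::'d. M)"
  have "distr ?P ?P (\<lambda>g. g \<circ> \<tau>) = ?P"
    using distr_PiM_reindex[of UNIV "\<lambda>_. M" \<tau> UNIV] \<open>bij \<tau>\<close>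
    by (simp add: prob_space_M bij_is_inj comp_def restrict_UNIV)
  moreover have "(\<lambda>g. \<lambda>k\<in>UNIV. g (\<tau> k)) \<in> ?P \<rightarrow>\<^sub>M ?P"
    by measurable
  ultimately show ?thesis
    using integral_distr[of "\<lambda>g. \<lambda>k\<in>UNIV. g (\<tau> k)" ?P ?P F] by (simp add: restrict_UNIV comp_def)
qed

lemma integrable_normalized_product:
  "integrable (PiM UNIV (\<lambda>_::'d::finite. M)) (\<lambda>g. g i * g j / (\<Sum>k\<in>UNIV. (g k)\<^sup>2))"
proof -
  interpret prob_space "PiM UNIV (\<lambda>_::'d. M)"
    by (simp add: prob_space_M prob_space_PiM)
  show ?thesis
    using abs_normalized_product_le_1 by (intro integrable_const_bound[where B = 1] AE_I2) simp_all
qed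

lemma integral_normalized_product_off_diagonal:
  fixes i j :: "'d::finite"
  assumes "i \<noteq> j"
  shows "(\<integral>g. g i * g j / (\<Sum>k\<in>UNIV. (g k)\<^sup>2) \<partial>PiM UNIV (\<lambda>_. M)) = 0"
proof -
  let ?q = "\<lambda>g::'d \<Rightarrow> real. g i * g j / (\<Sum>k\<in>UNIV. (g k)\<^sup>2)"
  have "?q (g(i := - g i)) = - ?q g" for g
  proof -
    have "(\<Sum>k\<in>UNIV. ((g(i := - g i)) k)\<^sup>2) = (\<Sum>k\<in>UNIV. (g k)\<^sup>2)"
      by (intro sum.cong) auto
    then show ?thesis
      using assms by simp
  qed
  then have "(\<integral>g. ?q g \<partial>PiM UNIV (\<lambda>_. M)) = - (\<integral>g. ?q g \<partial>PiM UNIV (\<lambda>_. M))"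
    using integral_PiM_flip_coordinate[of ?q i] by simp
  then show ?thesis
    by simp
qed

lemma integral_normalized_square:
  fixes i :: "'d::finite"
  shows "(\<integral>g. g i * g i / (\<Sum>k\<in>UNIV. (g k)\<^sup>2) \<partial>PiM UNIV (\<lambda>_. M)) = 1 / real CARD('d)"
proof -
  let ?P = "PiM UNIV (\<lambda>_::'d. M)"
  let ?E = "\<lambda>j. \<integral>g. g j * g j / (\<Sum>k\<in>UNIV. (g k)\<^sup>2) \<partial>?P"
  have exchangeable: "?E j = ?E i" for j
  proof -
    define \<tau> where "\<tau> = Transposition.transpose i j"
    have "(\<Sum>k\<in>UNIV. (g (\<tau> k))\<^sup>2) = (\<Sum>k\<in>UNIV. (g k)\<^sup>2)" for g :: "'d \<Rightarrow> real"
      using sum.reindex_bij_betw[of \<tau> UNIV UNIV "\<lambda>k. (g k)\<^sup>2"] by (simp add: \<tau>_def)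
    then show ?thesis
      using integral_PiM_permute[of "\<lambda>g. g j * g j / (\<Sum>k\<in>UNIV. (g k)\<^sup>2)" \<tau>]
      by (simp add: \<tau>_def)
  qed
  have "real CARD('d) * ?E i = (\<Sum>j\<in>(UNIV::'d set). ?E i)"
    by simp
  also have "\<dots> = (\<Sum>j\<in>UNIV. ?E j)"
    by (intro sum.cong refl exchangeable[symmetric])
  also have "\<dots> = (\<integral>g. (\<Sum>j\<in>UNIV. g j * g j / (\<Sum>k\<in>UNIV. (g k)\<^sup>2)) \<partial>?P)"
    by (rule Bochner_Integration.integral_sum[symmetric]) (rule integrable_normalized_product)
  also have "\<dots> = (\<integral>g. 1 \<partial>?P)"
  proof (rule integral_cong_AE)
    show "AE g in ?P. (\<Sum>j\<in>UNIV. g j * g j / (\<Sum>k\<in>UNIV. (g k)\<^sup>2)) = 1"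
      using AE_PiM_sum_squares_nonzero
      by eventually_elim (simp add: power2_eq_square flip: sum_divide_distrib)
  qed simp_all
  also have "\<dots> = 1"
    by (simp add: prob_space_M prob_space_PiM prob_space.prob_space)
  finally show ?thesis
    by (simp add: field_simps)
qed

lemma integral_normalized_quadratic_form:
  fixes A :: "real^'d::finite^'d"
  shows "integrable (PiM UNIV (\<lambda>_. M)) (\<lambda>g. \<Sum>i\<in>UNIV. \<Sum>j\<in>UNIV. A$i$j * (g i * g j / (\<Sum>k\<in>UNIV. (g k)\<^sup>2)))"
    and "(\<integral>g. (\<Sum>i\<in>UNIV. \<Sum>j\<in>UNIV. A$i$j * (g i * g j / (\<Sum>k\<in>UNIV. (g k)\<^sup>2))) \<partial>PiM UNIV (\<lambda>_. M))
       = trace A / real CARD('d)"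
proof -
  show integrable: "integrable (PiM UNIV (\<lambda>_. M)) (\<lambda>g. \<Sum>i\<in>UNIV. \<Sum>j\<in>UNIV. A$i$j * (g i * g j / (\<Sum>k\<in>UNIV. (g k)\<^sup>2)))"
    by (intro Bochner_Integration.integrable_sum integrable_mult_right integrable_normalized_product)
  have moments: "(\<integral>g. g i * g j / (\<Sum>k\<in>UNIV. (g k)\<^sup>2) \<partial>PiM UNIV (\<lambda>_. M)) = (if i = j then 1 / real CARD('d) else 0)"
    for i j :: 'd
    by (simp add: integral_normalized_product_off_diagonal integral_normalized_square)
  show "(\<integral>g. (\<Sum>i\<in>UNIV. \<Sum>j\<in>UNIV. A$i$j * (g i * g j / (\<Sum>k\<in>UNIV. (g k)\<^sup>2))) \<partial>PiM UNIV (\<lambda>_. M))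
       = trace A / real CARD('d)"
    by (simp add: Bochner_Integration.integral_sum Bochner_Integration.integrable_sum integrable_mult_right integrable_normalized_product
        moments trace_def sum_divide_distrib if_distrib cong: if_cong del: times_divide_eq_right) simp
qed

end

lemma distr_uminus_normal_density:
  fixes s :: real
  defines "N \<equiv> density lborel (normal_density 0 s)"
  shows "distr N N uminus = N"
proof -
  have "N = density (distr lborel borel uminus) (normal_density 0 s)"
    by (simp add: N_def lborel_distr_uminus)
  also have "\<dots> = distr (density lborel (\<lambda>x. normal_density 0 s (- x))) borel uminus"
    by (rule density_distr) simp_all
  also have "(\<lambda>x. ennreal (normal_density 0 s (- x))) = normal_density 0 s"
    by (simp add: normal_density_def)
  finally have "N = distr N borel uminus"
    unfolding N_def .
  also have "\<dots> = distr N N uminus"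
    by (rule distr_cong) (simp_all add: N_def)
  finally show ?thesis ..
qed

lemma AE_normal_density_neq: "AE x in density lborel (normal_density \<mu> s). x \<noteq> c"
  using AE_lborel_singleton[of c] by (simp add: AE_density) (erule eventually_mono, simp)

lemma prob_space_beta_law: "prob_space beta_law"
  unfolding beta_law_def by (simp add: prob_space_PiM prob_space_normal_density)

lemma beta_law_normalized_quadratic_form:
  fixes A :: "real^'d::finite^'d"
  shows "AE g in (beta_law :: ('d \<Rightarrow> real) measure). (\<Sum>k\<in>UNIV. (g k)\<^sup>2) \<noteq> 0"
    and "integrable beta_law (\<lambda>g. \<Sum>i\<in>UNIV. \<Sum>j\<in>UNIV. A$i$j * (g i * g j / (\<Sum>k\<in>UNIV. (g k)\<^sup>2)))"
    and "(\<integral>g. (\<Sum>i\<in>UNIV. \<Sum>j\<in>UNIV. A$i$j * (g i * g j / (\<Sum>k\<in>UNIV. (g k)\<^sup>2))) \<partial>beta_law)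
       = trace A / real CARD('d)"
proof -
  define N where "N = density lborel (normal_density 0 (sqrt (1 / real CARD('d))))"
  have law: "beta_law = PiM UNIV (\<lambda>_::'d. N)"
    unfolding beta_law_def N_def ..
  have "prob_space N" "sets N = sets borel" "distr N N uminus = N" "AE x in N. x \<noteq> 0"
    unfolding N_def by (simp_all add: prob_space_normal_density distr_uminus_normal_density AE_normal_density_neq)
  note N = this
  show "AE g in (beta_law :: ('d \<Rightarrow> real) measure). (\<Sum>k\<in>UNIV. (g k)\<^sup>2) \<noteq> 0"
    unfolding law by (rule AE_PiM_sum_squares_nonzero[OF N])
  show "integrable beta_law (\<lambda>g. \<Sum>i\<in>UNIV. \<Sum>j\<in>UNIV. A$i$j * (g i * g j / (\<Sum>k\<in>UNIV. (g k)\<^sup>2)))"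
       "(\<integral>g. (\<Sum>i\<in>UNIV. \<Sum>j\<in>UNIV. A$i$j * (g i * g j / (\<Sum>k\<in>UNIV. (g k)\<^sup>2))) \<partial>beta_law)
       = trace A / real CARD('d)"
    unfolding law by (rule integral_normalized_quadratic_form[OF N])+
qed

section \<open>Expected kernel alignment\<close>

lemma kernel_alignment_ntk:
  fixes X :: "real^'m^'d" and W :: "real^'d^'n" and W2 :: "real^'n" and \<beta> :: "real^'d"
  assumes XX: "X ** transpose X = mat 1" and "\<beta> \<noteq> 0"
  shows "kernel_alignment (ntk_final X \<beta>) (ntk_init X W W2)
    = (sgn \<beta> \<bullet> (transpose W ** W *v sgn \<beta>) + (trace (transpose W ** W) + (norm W2)\<^sup>2 * (real CARD('d) + 1)))
      / (sqrt (real CARD('d) + 3) * frob_norm (transpose W ** W + (norm W2)\<^sup>2 *\<^sub>R mat 1))"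
proof -
  define M where "M = transpose W ** W"
  define c where "c = (norm W2)\<^sup>2"
  define A where "A = outer (sgn \<beta>) (sgn \<beta>) + mat 1"
  define B where "B = M + c *\<^sub>R mat 1"
  have "ntk_final X \<beta> = norm \<beta> *\<^sub>R (transpose X ** A ** X)"
    unfolding ntk_final_def A_def sgn_div_norm ..
  moreover have "ntk_init X W W2 = transpose X ** B ** X"
    unfolding ntk_init_def B_def M_def c_def ..
  ultimately have "kernel_alignment (ntk_final X \<beta>) (ntk_init X W W2) = trace (A ** B) / (frob_norm A * frob_norm B)"
    using \<open>\<beta> \<noteq> 0\<close>
    by (simp add: kernel_alignment_def scalar_matrix_assoc[symmetric] trace_scaleR frob_norm_scaleR
        trace_mult_conj_coisometry[OF XX] frob_norm_conj_coisometry[OF XX])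
  also have "trace (A ** B) = sgn \<beta> \<bullet> (M *v sgn \<beta>) + (trace M + c * (real CARD('d) + 1))"
  proof -
    have "sgn \<beta> \<bullet> sgn \<beta> = 1"
      using \<open>\<beta> \<noteq> 0\<close> by (simp add: norm_sgn flip: power2_norm_eq_inner)
    then show ?thesis
      unfolding A_def B_def
      by (simp add: matrix_add_rdistrib trace_add trace_outer_mult matrix_vector_mult_add_rdistrib
          inner_add_right trace_scaleR trace_I algebra_simps flip: scaleR_matrix_vector_assoc)
  qed
  also have "frob_norm A = sqrt (real CARD('d) + 3)"
    unfolding A_def using \<open>\<beta> \<noteq> 0\<close> by (simp add: frob_norm_outer_unit_plus_id norm_sgn)
  finally show ?thesis
    unfolding M_def B_def c_def .
qed

text \<open>For beta = 0 the final kernel vanishes and the alignment is the junk value 0 / 0 = 0.\<close>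

lemma kernel_alignment_ntk_coordinates:
  fixes X :: "real^'m^'d::finite" and W :: "real^'d^'n" and W2 :: "real^'n" and g :: "'d \<Rightarrow> real"
  assumes XX: "X ** transpose X = mat 1"
  defines "M \<equiv> transpose W ** W"
  shows "kernel_alignment (ntk_final X (\<chi> i. g i)) (ntk_init X W W2)
    = (if (\<Sum>k\<in>UNIV. (g k)\<^sup>2) = 0 then 0
       else ((\<Sum>i\<in>UNIV. \<Sum>j\<in>UNIV. M$i$j * (g i * g j / (\<Sum>k\<in>UNIV. (g k)\<^sup>2)))
             + (trace M + (norm W2)\<^sup>2 * (real CARD('d) + 1)))
         / (sqrt (real CARD('d) + 3) * frob_norm (M + (norm W2)\<^sup>2 *\<^sub>R mat 1)))"
proof (cases "(\<chi> i. g i) = 0")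
  case True
  then have "g = (\<lambda>_. 0)"
    by (simp add: vec_eq_iff fun_eq_iff)
  with True show ?thesis
    by (simp add: kernel_alignment_def ntk_final_def trace_def)
next
  case False
  then have "(\<Sum>k\<in>UNIV. (g k)\<^sup>2) \<noteq> 0"
    by (auto simp: vec_eq_iff sum_nonneg_eq_0_iff)
  with False show ?thesis
    unfolding M_def kernel_alignment_ntk[OF XX False] inner_sgn_matrix_vector_sgn by simp
qed

lemma expected_KA_eq:
  fixes X :: "real^'m^'d::finite" and W :: "real^'d^'n" and W2 :: "real^'n"
  assumes XX: "X ** transpose X = mat 1"
  defines "M \<equiv> transpose W ** W"
  shows "expected_KA X W W2
    = (trace M / real CARD('d) + (trace M + (norm W2)\<^sup>2 * (real CARD('d) + 1)))
      / (sqrt (real CARD('d) + 3) * frob_norm (M + (norm W2)\<^sup>2 *\<^sub>R mat 1))"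
proof -
  define C where "C = trace M + (norm W2)\<^sup>2 * (real CARD('d) + 1)"
  define D where "D = sqrt (real CARD('d) + 3) * frob_norm (M + (norm W2)\<^sup>2 *\<^sub>R mat 1)"
  define S where "S g = (\<Sum>k\<in>UNIV. (g k)\<^sup>2)" for g :: "'d \<Rightarrow> real"
  define Q where "Q g = (\<Sum>i\<in>UNIV. \<Sum>j\<in>UNIV. M$i$j * (g i * g j / S g))" for g
  have "expected_KA X W W2 = (\<integral>g. (if S g = 0 then 0 else (Q g + C) / D) \<partial>beta_law)"
    unfolding expected_KA_def kernel_alignment_ntk_coordinates[OF XX] S_def Q_def C_def D_def M_def ..
  also have "\<dots> = (\<integral>g. (Q g + C) / D \<partial>beta_law)"
  proof (rule integral_cong_AE)
    show "(\<lambda>g. if S g = 0 then 0 else (Q g + C) / D) \<in> borel_measurable beta_law"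
      unfolding S_def Q_def beta_law_def by measurable
    show "(\<lambda>g. (Q g + C) / D) \<in> borel_measurable beta_law"
      unfolding S_def Q_def beta_law_def by measurable
    show "AE g in beta_law. (if S g = 0 then 0 else (Q g + C) / D) = (Q g + C) / D"
      using beta_law_normalized_quadratic_form(1) unfolding S_def by eventually_elim simp
  qed
  also have "\<dots> = (trace M / real CARD('d) + C) / D"
  proof -
    interpret prob_space "beta_law :: ('d \<Rightarrow> real) measure"
      by (rule prob_space_beta_law)
    have "integrable beta_law Q" "(\<integral>g. Q g \<partial>beta_law) = trace M / real CARD('d)"
      unfolding Q_def S_def by (rule beta_law_normalized_quadratic_form(2,3))+
    then show ?thesis
      by (simp add: Bochner_Integration.integral_add prob_space)
  qed
  finally show ?thesis
    unfolding C_def D_def .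
qed

lemma expected_KA_eq_anisotropy:
  fixes X :: "real^'m^'d::finite" and W :: "real^'d^'n" and W2 :: "real^'n"
  assumes XX: "X ** transpose X = mat 1" and "frob_norm W = \<sigma>" and "norm W2 = \<sigma>"
  shows "expected_KA X W W2
    = \<sigma>\<^sup>2 * (1 / real CARD('d) + real CARD('d) + 2)
      / (sqrt (real CARD('d) + 3)
         * sqrt ((anisotropy (transpose W ** W))\<^sup>2 + (\<sigma>\<^sup>2 * (real CARD('d) + 1))\<^sup>2 / real CARD('d)))"
proof -
  have trace: "trace (transpose W ** W) = \<sigma>\<^sup>2"
    using frob_norm_squared_eq_trace[of W] \<open>frob_norm W = \<sigma>\<close> by simp
  have "(frob_norm (transpose W ** W + \<sigma>\<^sup>2 *\<^sub>R mat 1))\<^sup>2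
      = (anisotropy (transpose W ** W))\<^sup>2 + (\<sigma>\<^sup>2 * (real CARD('d) + 1))\<^sup>2 / real CARD('d)"
    unfolding frob_norm_add_scaleR_mat_squared_anisotropy trace by (simp add: algebra_simps)
  then have "frob_norm (transpose W ** W + \<sigma>\<^sup>2 *\<^sub>R mat 1)
      = sqrt ((anisotropy (transpose W ** W))\<^sup>2 + (\<sigma>\<^sup>2 * (real CARD('d) + 1))\<^sup>2 / real CARD('d))"
    using frob_norm_nonneg real_sqrt_unique by metis
  then show ?thesis
    using expected_KA_eq[OF XX, of W W2] \<open>norm W2 = \<sigma>\<close>
    by (simp add: trace algebra_simps)
qed

lemma expected_KA_le_iff_anisotropy_le:
  fixes X :: "real^'m^'d::finite" and W W' :: "real^'d^'n" and W2 :: "real^'n"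
  assumes XX: "X ** transpose X = mat 1" and "\<sigma> \<noteq> 0"
    and "frob_norm W = \<sigma>" "frob_norm W' = \<sigma>" "norm W2 = \<sigma>"
  shows "expected_KA X W W2 \<le> expected_KA X W' W2
    \<longleftrightarrow> anisotropy (transpose W' ** W') \<le> anisotropy (transpose W ** W)"
proof -
  define K where "K = \<sigma>\<^sup>2 * (1 / real CARD('d) + real CARD('d) + 2)"
  define R where "R = (\<sigma>\<^sup>2 * (real CARD('d) + 1))\<^sup>2 / real CARD('d)"
  define F where "F a = K / (sqrt (real CARD('d) + 3) * sqrt (a\<^sup>2 + R))" for a :: real
  have "0 < K" "0 < R"
    using \<open>\<sigma> \<noteq> 0\<close> by (simp_all add: K_def R_def add_pos_pos)
  have F_le_iff: "F a \<le> F b \<longleftrightarrow> b \<le> a" if "0 \<le> a" "0 \<le> b" for a b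
  proof -
    have "F a \<le> F b \<longleftrightarrow> sqrt (b\<^sup>2 + R) \<le> sqrt (a\<^sup>2 + R)"
      using \<open>0 < K\<close> \<open>0 < R\<close> by (simp add: F_def field_simps add_pos_nonneg)
    also have "\<dots> \<longleftrightarrow> b \<le> a"
      using that by (simp add: power_mono_iff)
    finally show ?thesis .
  qed
  show ?thesis
    using F_le_iff[OF anisotropy_nonneg anisotropy_nonneg]
      expected_KA_eq_anisotropy[OF XX \<open>frob_norm W = \<sigma>\<close> \<open>norm W2 = \<sigma>\<close>]
      expected_KA_eq_anisotropy[OF XX \<open>frob_norm W' = \<sigma>\<close> \<open>norm W2 = \<sigma>\<close>]
    by (simp add: F_def K_def R_def)
qed

theorem theorem1:
  fixes X :: "real^'m^'d" and W2 :: "real^'n" and \<sigma> :: real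
  assumes "CARD('m) \<ge> CARD('d)" and "CARD('n) \<ge> CARD('d)"
    and "X ** transpose X = mat 1"
    and "\<sigma> > 0" and "norm W2 = \<sigma>"
  shows "(\<exists>W1 :: real^'d^'n. frob_norm W1 = \<sigma> \<and>
            (\<forall>s\<in>sq_singular_values W1. s = \<sigma>\<^sup>2 / real CARD('d)))
       \<and> (\<forall>W1 :: real^'d^'n. frob_norm W1 = \<sigma> \<longrightarrow>
            ((\<forall>W :: real^'d^'n. frob_norm W = \<sigma> \<longrightarrow>
                 expected_KA X W W2 \<le> expected_KA X W1 W2)
             \<longleftrightarrow> (\<forall>s\<in>sq_singular_values W1. s = \<sigma>\<^sup>2 / real CARD('d))))"
proof -
  obtain W0 :: "real^'d^'n" where "frob_norm W0 = \<sigma>"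
    and "transpose W0 ** W0 = (\<sigma>\<^sup>2 / real CARD('d)) *\<^sub>R mat 1"
    using exists_isotropic_with_frob_norm \<open>CARD('n) \<ge> CARD('d)\<close> \<open>\<sigma> > 0\<close> by (metis less_imp_le)
  then have W0_isotropic: "anisotropy (transpose W0 ** W0) = 0"
    by (simp add: anisotropy_eq_0_iff trace_scaleR trace_I)
  note KA_le_iff = expected_KA_le_iff_anisotropy_le[OF \<open>X ** transpose X = mat 1\<close> _ _ _ \<open>norm W2 = \<sigma>\<close>]
  have maximizer_iff: "(\<forall>W. frob_norm W = \<sigma> \<longrightarrow> expected_KA X W W2 \<le> expected_KA X W1 W2)
      \<longleftrightarrow> anisotropy (transpose W1 ** W1) = 0"
    if "frob_norm W1 = \<sigma>" for W1 :: "real^'d^'n"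
  proof
    assume "\<forall>W. frob_norm W = \<sigma> \<longrightarrow> expected_KA X W W2 \<le> expected_KA X W1 W2"
    then have "anisotropy (transpose W1 ** W1) \<le> anisotropy (transpose W0 ** W0)"
      using KA_le_iff \<open>frob_norm W0 = \<sigma>\<close> that \<open>\<sigma> > 0\<close> by simp
    then show "anisotropy (transpose W1 ** W1) = 0"
      using W0_isotropic anisotropy_nonneg[of "transpose W1 ** W1"] by simp
  next
    assume "anisotropy (transpose W1 ** W1) = 0"
    then show "\<forall>W. frob_norm W = \<sigma> \<longrightarrow> expected_KA X W W2 \<le> expected_KA X W1 W2"
      using KA_le_iff that \<open>\<sigma> > 0\<close> by (simp add: anisotropy_nonneg)
  qed
  show ?thesis
    using \<open>frob_norm W0 = \<sigma>\<close> W0_isotropic maximizer_iff anisotropy_gram_eq_0_iff by blast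
qed

end
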